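(* Let $S\neq\mathbb N$ be a numerical semigroup with cyclotomic exponent sequence $\mathbf e$. Then every $d\in\mathcal E(S)$ satisfies $\mathfrak d(d)\ge2$. Moreover, if $\alpha$ is a minimal element of $(\mathcal E(S),\le_S)$, then $e_\alpha=\mathfrak d(\alpha)-1$.
   Context: A numerical semigroup $S$ is a submonoid of $(\mathbb N,+)$ with finite complement, with minimal generating set $A=\{n_1,\dots,n_e\}$. The cyclotomic exponent sequence is the unique integer sequence $(e_j)_{j\ge1}$ with $(1-x)\sum_{s\in S}x^s=\prod_{j\ge1}(1-x^j)^{e_j}$ in $\mathbb Z[[x]]$; $\mathcal E(S)=\{d\in\mathbb N: d\ge2,\ e_d\ne0,\ d\notin A\}$. Write $a\le_S b$ if $b-a\in S$. With $\varphi:\mathbb N^e\to S$, $\varphi(a)=\sum_ia_in_i$, the denumerant of $s\in S$ is $\mathfrak d(s)=|\varphi^{-1}(s)|$, the number of factorizations of $s$. *)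

theory Defs
  imports "HOL-Computational_Algebra.Formal_Power_Series"
begin

definition numerical_semigroup :: "nat set \<Rightarrow> bool" where
  "numerical_semigroup S \<longleftrightarrow> 0 \<in> S \<and> (\<forall>a\<in>S. \<forall>b\<in>S. a + b \<in> S) \<and> finite (UNIV - S)"

definition min_gens :: "nat set \<Rightarrow> nat set" where
  "min_gens S = {a \<in> S. a \<noteq> 0 \<and> \<not> (\<exists>b\<in>S. \<exists>c\<in>S. b \<noteq> 0 \<and> c \<noteq> 0 \<and> a = b + c)}"

definition denumerant :: "nat set \<Rightarrow> nat \<Rightarrow> nat" where
  "denumerant S s = card {f :: nat \<Rightarrow> nat. (\<forall>a. a \<notin> min_gens S \<longrightarrow> f a = 0)
                                \<and> (\<Sum>a\<in>min_gens S. f a * a) = s}"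

definition le_S :: "nat set \<Rightarrow> nat \<Rightarrow> nat \<Rightarrow> bool" where
  "le_S S a b \<longleftrightarrow> a \<le> b \<and> b - a \<in> S"

definition semigroup_poly_fps :: "nat set \<Rightarrow> rat fps" where
  "semigroup_poly_fps S = (1 - fps_X) * Abs_fps (\<lambda>n. if n \<in> S then 1 else 0)"

definition cyc_factor :: "nat \<Rightarrow> int \<Rightarrow> rat fps" where
  "cyc_factor j k = (if k \<ge> 0 then (1 - fps_X ^ j) ^ nat k
                     else inverse ((1 - fps_X ^ j) ^ nat (- k)))"

text \<open>e is the cyclotomic exponent sequence of S: the identity
  (1-x) sum_{s in S} x^s = prod_{j>=1} (1-x^j)^{e_j} holds in the x-adic sense, i.e.
  for every n the n-th coefficients agree with the partial product over j = 1..n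
  (factors with j > n do not affect the coefficient of x^n). The value e 0 is irrelevant.\<close>
definition cyclotomic_exponent_seq :: "nat set \<Rightarrow> (nat \<Rightarrow> int) \<Rightarrow> bool" where
  "cyclotomic_exponent_seq S e \<longleftrightarrow>
     (\<forall>n. fps_nth (semigroup_poly_fps S) n = fps_nth (\<Prod>j\<in>{1..n}. cyc_factor j (e j)) n)"

definition cyc_E :: "nat set \<Rightarrow> (nat \<Rightarrow> int) \<Rightarrow> nat set" where
  "cyc_E S e = {d. d \<ge> 2 \<and> e d \<noteq> 0 \<and> d \<notin> min_gens S}"

end

(* Write A for the minimal generators of S and H(x) = sum_{s in S} x^s. The generating
   function sum_s d(s) x^s of the denumerant is prod_{a in A} (1 - x^a)^(-1); since e_1 = 1,
   it equals H(x) prod_{j >= 2} (1 - x^j)^(c_j) with c_j = - e_j - [j in A].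
   Comparing coefficients of x^d in H(x) = prod_{j >= 2} (1 - x^j)^(e_j) shows by induction
   that e_d <> 0 forces d in S for d >= 2. If alpha is in S and every j < alpha with c_j <> 0 lies in S
   but not below alpha for <=_S, then the second product is supported on sums of such j, so
   only its constant term and its x^alpha term contribute to the coefficient of x^alpha:
   d(alpha) = 1 - c_alpha. For a generator this gives e_a = -1, hence c_j <> 0 only for
   j in E(S), where c_j = - e_j; for a <=_S-minimal alpha in E(S) it gives
   e_alpha = d(alpha) - 1. Then d(alpha) >= 2 because e_alpha <> 0, and every d in E(S) lies
   above such an alpha, with d monotone for <=_S. *)

theory Submission
  imports Defs
begin

unbundle fps_syntax

definition fps_support :: "'a::zero fps \<Rightarrow> nat set" where
  "fps_support f = {i. f $ i \<noteq> 0}"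

definition add_submonoid :: "nat set \<Rightarrow> bool" where
  "add_submonoid M \<longleftrightarrow> 0 \<in> M \<and> (\<forall>a\<in>M. \<forall>b\<in>M. a + b \<in> M)"

lemma add_submonoid_multiples: "add_submonoid {i. j dvd i}"
  by (auto simp: add_submonoid_def)

lemma add_submonoid_multiples_subset:
  assumes "add_submonoid M" "j \<in> M"
  shows "{i. j dvd i} \<subseteq> M"
proof
  have "j * k \<in> M" for k
    by (induction k) (use assms in \<open>auto simp: add_submonoid_def\<close>)
  then show "i \<in> M" if "i \<in> {i. j dvd i}" for i
    using that by auto
qed

lemma sum_mult_mem_add_submonoid:
  assumes "add_submonoid M" "B \<subseteq> M"
  shows "(\<Sum>a\<in>B. f a * a) \<in> M"
  using assms(2)
proof (induction B rule: infinite_finite_induct)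
  case (insert x B)
  have "f x * x \<in> M"
    using add_submonoid_multiples_subset[OF assms(1), of x] insert.prems by auto
  moreover have "(\<Sum>a\<in>B. f a * a) \<in> M"
    using insert.IH insert.prems by blast
  ultimately show ?case
    using insert.hyps assms(1) by (simp add: add_submonoid_def)
qed (use assms(1) in \<open>simp_all add: add_submonoid_def\<close>)

lemma fps_support_one: "add_submonoid M \<Longrightarrow> fps_support (1 :: 'a::zero_neq_one fps) \<subseteq> M"
  by (auto simp: fps_support_def add_submonoid_def)

lemma fps_support_mult:
  fixes f g :: "'a::comm_semiring_1 fps"
  assumes "add_submonoid M" "fps_support f \<subseteq> M" "fps_support g \<subseteq> M"
  shows "fps_support (f * g) \<subseteq> M"
proof
  fix n assume "n \<in> fps_support (f * g)"
  then have "(\<Sum>i=0..n. f $ i * g $ (n - i)) \<noteq> 0"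
    by (simp add: fps_support_def fps_mult_nth)
  then obtain i where "i \<in> {0..n}" "f $ i * g $ (n - i) \<noteq> 0"
    by (meson sum.neutral)
  then have "i \<le> n" "i \<in> M" "n - i \<in> M"
    using assms(2,3) by (auto simp: fps_support_def)
  then have "i + (n - i) \<in> M"
    using assms(1) unfolding add_submonoid_def by blast
  then show "n \<in> M"
    using \<open>i \<le> n\<close> by simp
qed

lemma fps_support_power:
  fixes f :: "'a::comm_semiring_1 fps"
  assumes "add_submonoid M" "fps_support f \<subseteq> M"
  shows "fps_support (f ^ k) \<subseteq> M"
proof (induction k)
  case 0
  then show ?case using fps_support_one[OF assms(1)] by simp
next
  case (Suc k)
  then show ?case using fps_support_mult[OF assms Suc] by simp
qed

lemma fps_mult_nth_multiples:
  fixes f g :: "'a::comm_semiring_1 fps"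
  assumes "fps_support f \<subseteq> {i. a dvd i}" "a > 0"
  shows "(f * g) $ a = f $ 0 * g $ a + f $ a * g $ 0"
proof -
  have "(f * g) $ a = (\<Sum>i\<in>{0..a}. f $ i * g $ (a - i))"
    by (simp add: fps_mult_nth)
  also have "\<dots> = (\<Sum>i\<in>{0, a}. f $ i * g $ (a - i))"
  proof (rule sum.mono_neutral_right)
    show "\<forall>i\<in>{0..a} - {0, a}. f $ i * g $ (a - i) = 0"
    proof
      fix i assume "i \<in> {0..a} - {0, a}"
      then have "\<not> a dvd i"
        using dvd_imp_le by fastforce
      then have "f $ i = 0"
        using assms(1) unfolding fps_support_def by blast
      then show "f $ i * g $ (a - i) = 0"
        by simp
    qed
  qed auto
  finally show ?thesis
    using assms(2) by simp
qed

lemma fps_power_nth_multiples: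
  fixes f :: "'a::comm_semiring_1 fps"
  assumes "fps_support f \<subseteq> {i. a dvd i}" "a > 0" "f $ 0 = 1"
  shows "(f ^ m) $ a = of_nat m * f $ a"
  by (induction m)
    (simp_all add: fps_mult_nth_multiples[OF assms(1,2)] fps_nth_power_0 assms algebra_simps)

definition fps_geometric :: "nat \<Rightarrow> 'a::{zero,one} fps" where
  "fps_geometric j = Abs_fps (\<lambda>i. if j dvd i then 1 else 0)"

lemma one_minus_fps_X_power_mult_geometric:
  assumes "j > 0"
  shows "(1 - fps_X ^ j) * (fps_geometric j :: 'a::comm_ring_1 fps) = 1"
proof (rule fps_ext)
  fix n
  show "((1 - fps_X ^ j) * fps_geometric j) $ n = (1 :: 'a fps) $ n"
    using assms by (auto simp: algebra_simps fps_X_power_mult_nth fps_geometric_def dvd_minus_self)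
qed

lemma fps_support_one_minus_fps_X_power:
  "fps_support (1 - fps_X ^ j :: 'a::comm_ring_1 fps) \<subseteq> {i. j dvd i}"
  by (auto simp: fps_support_def fps_X_power_nth split: if_splits)

lemma fps_support_geometric: "fps_support (fps_geometric j) \<subseteq> {i. j dvd i}"
  by (auto simp: fps_support_def fps_geometric_def split: if_splits)

lemma cyc_factor_altdef:
  assumes "j > 0"
  shows "cyc_factor j k = (if k \<ge> 0 then (1 - fps_X ^ j) ^ nat k else fps_geometric j ^ nat (- k))"
proof -
  have "inverse (1 - fps_X ^ j) = (fps_geometric j :: rat fps)"
    by (rule fps_inverse_unique[OF one_minus_fps_X_power_mult_geometric[OF assms]])
  then show ?thesis
    by (simp add: cyc_factor_def fps_inverse_power)
qed

lemma cyc_factor_zero [simp]: "cyc_factor j 0 = 1"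
  by (simp add: cyc_factor_def)

lemma cyc_factor_minus_one: "j > 0 \<Longrightarrow> cyc_factor j (- 1) = fps_geometric j"
  by (simp add: cyc_factor_altdef)

lemma power_mult_power_cancel:
  fixes u v :: "'a::comm_monoid_mult"
  assumes "u * v = 1"
  shows "u ^ p * v ^ q = (if q \<le> p then u ^ (p - q) else v ^ (q - p))"
proof (cases "q \<le> p")
  case True
  then have "u ^ p = u ^ (p - q) * u ^ q"
    by (simp flip: power_add)
  then have "u ^ p * v ^ q = u ^ (p - q) * (u * v) ^ q"
    by (simp add: power_mult_distrib mult_ac)
  then show ?thesis
    using True assms by simp
next
  case False
  then have "v ^ q = v ^ (q - p) * v ^ p"
    by (simp flip: power_add)
  then have "u ^ p * v ^ q = v ^ (q - p) * (u * v) ^ p"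
    by (simp add: power_mult_distrib mult_ac)
  then show ?thesis
    using False assms by simp
qed

lemma cyc_factor_int_diff:
  assumes "j > 0"
  shows "cyc_factor j (int p - int q) = (1 - fps_X ^ j) ^ p * fps_geometric j ^ q"
  using assms
  by (cases "q \<le> p") (simp_all add: cyc_factor_altdef
      power_mult_power_cancel[OF one_minus_fps_X_power_mult_geometric[OF assms]] flip: of_nat_diff)

lemma cyc_factor_add:
  assumes "j > 0"
  shows "cyc_factor j a * cyc_factor j b = cyc_factor j (a + b)"
proof -
  have int_split: "int (nat c) - int (nat (- c)) = c" for c :: int
    by simp
  have "cyc_factor j a * cyc_factor j b
      = cyc_factor j (int (nat a) - int (nat (- a))) * cyc_factor j (int (nat b) - int (nat (- b)))"
    by (simp only: int_split)
  also have "\<dots> = (1 - fps_X ^ j) ^ (nat a + nat b) * fps_geometric j ^ (nat (- a) + nat (- b))"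
    by (simp only: cyc_factor_int_diff[OF assms] power_add mult_ac)
  also have "\<dots> = cyc_factor j (int (nat a + nat b) - int (nat (- a) + nat (- b)))"
    by (rule cyc_factor_int_diff[OF assms, symmetric])
  also have "int (nat a + nat b) - int (nat (- a) + nat (- b)) = a + b"
    by simp
  finally show ?thesis .
qed

lemma fps_support_cyc_factor: "j > 0 \<Longrightarrow> fps_support (cyc_factor j k) \<subseteq> {i. j dvd i}"
  by (simp add: cyc_factor_altdef fps_support_power add_submonoid_multiples
      fps_support_one_minus_fps_X_power fps_support_geometric)

lemma cyc_factor_nth_0: "j > 0 \<Longrightarrow> cyc_factor j k $ 0 = 1"
  by (simp add: cyc_factor_altdef fps_nth_power_0 fps_geometric_def zero_power)

lemma cyc_factor_nth_self:
  assumes "j > 0"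
  shows "cyc_factor j k $ j = - of_int k"
proof -
  have u: "(1 - fps_X ^ j :: rat fps) $ 0 = 1" "(1 - fps_X ^ j :: rat fps) $ j = - 1"
    and v: "(fps_geometric j :: rat fps) $ 0 = 1" "(fps_geometric j :: rat fps) $ j = 1"
    using assms by (simp_all add: fps_geometric_def)
  show ?thesis
    using fps_power_nth_multiples[OF fps_support_one_minus_fps_X_power assms u(1)]
      fps_power_nth_multiples[OF fps_support_geometric assms v(1)] u(2) v(2) assms
    by (simp add: cyc_factor_altdef of_nat_nat)
qed

lemma cyc_factor_mult_nth_self:
  assumes "j > 0"
  shows "(cyc_factor j k * g) $ j = g $ j - of_int k * g $ 0"
  using fps_mult_nth_multiples[OF fps_support_cyc_factor[OF assms] assms, of k g] assms
  by (simp add: cyc_factor_nth_0 cyc_factor_nth_self)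

lemma prod_cyc_factor_nth_0: "0 \<notin> K \<Longrightarrow> (\<Prod>j\<in>K. cyc_factor j (k j)) $ 0 = 1"
  by (induction K rule: infinite_finite_induct) (auto simp: cyc_factor_nth_0)

lemma fps_support_prod_cyc_factor:
  assumes "add_submonoid M" "0 \<notin> K" "\<And>j. j \<in> K \<Longrightarrow> k j \<noteq> 0 \<Longrightarrow> j \<in> M"
  shows "fps_support (\<Prod>j\<in>K. cyc_factor j (k j)) \<subseteq> M"
  using assms(2,3)
proof (induction K rule: infinite_finite_induct)
  case (insert j K)
  have "fps_support (cyc_factor j (k j)) \<subseteq> M"
  proof (cases "k j = 0")
    case True
    then show ?thesis using assms(1) by (simp add: fps_support_one)
  next
    case False
    then show ?thesis
      using insert.prems fps_support_cyc_factor[of j "k j"]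
        add_submonoid_multiples_subset[OF assms(1), of j] by auto
  qed
  then show ?case
    using insert assms(1) by (simp add: fps_support_mult)
qed (simp_all add: fps_support_one assms(1))

lemma fps_cutoff_mult_cong:
  fixes f f' g g' :: "'a::comm_semiring_1 fps"
  assumes "fps_cutoff n f = fps_cutoff n f'" "fps_cutoff n g = fps_cutoff n g'"
  shows "fps_cutoff n (f * g) = fps_cutoff n (f' * g')"
proof (rule fps_ext)
  fix k
  have "(f * g) $ k = (f' * g') $ k" if "k < n"
  proof -
    have "(f * g) $ k = (fps_cutoff n f * fps_cutoff n g) $ k"
      using that by (simp add: fps_cutoff_left_mult_nth fps_cutoff_right_mult_nth)
    also have "\<dots> = (f' * g') $ k"
      using that by (simp add: assms fps_cutoff_left_mult_nth fps_cutoff_right_mult_nth)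
    finally show ?thesis .
  qed
  then show "fps_cutoff n (f * g) $ k = fps_cutoff n (f' * g') $ k"
    by simp
qed

lemma fps_cutoff_prod_cong:
  fixes f g :: "'b \<Rightarrow> 'a::comm_semiring_1 fps"
  assumes "\<And>j. j \<in> K \<Longrightarrow> fps_cutoff n (f j) = fps_cutoff n (g j)"
  shows "fps_cutoff n (\<Prod>j\<in>K. f j) = fps_cutoff n (\<Prod>j\<in>K. g j)"
  using assms
proof (induction K rule: infinite_finite_induct)
  case (insert x K)
  have "fps_cutoff n (\<Prod>j\<in>K. f j) = fps_cutoff n (\<Prod>j\<in>K. g j)"
    by (rule insert.IH, rule insert.prems) simp
  then show ?case
    using insert.hyps fps_cutoff_mult_cong[OF insert.prems[of x]] by simp
qed simp_all

lemma fps_cutoff_eq_nthD: "fps_cutoff n f = fps_cutoff n g \<Longrightarrow> k < n \<Longrightarrow> f $ k = g $ k"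
  by (metis fps_cutoff_nth)

lemma fps_cutoff_cyc_factor:
  assumes "0 < j" "n \<le> j"
  shows "fps_cutoff n (cyc_factor j k) = fps_cutoff n 1"
proof (rule fps_ext)
  fix i
  have "cyc_factor j k $ i = 0" if "0 < i" "i < n"
  proof -
    have "\<not> j dvd i"
      using that assms by (auto dest: dvd_imp_le)
    then show ?thesis
      using fps_support_cyc_factor[OF assms(1), of k] unfolding fps_support_def by blast
  qed
  then show "fps_cutoff n (cyc_factor j k) $ i = fps_cutoff n 1 $ i"
    using cyc_factor_nth_0[OF assms(1), of k] by (cases "i = 0") auto
qed

inductive_set add_monoid_gen :: "nat set \<Rightarrow> nat set" for K where
  zero: "0 \<in> add_monoid_gen K"
| add: "j \<in> K \<Longrightarrow> m \<in> add_monoid_gen K \<Longrightarrow> j + m \<in> add_monoid_gen K"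

lemma add_submonoid_add_monoid_gen: "add_submonoid (add_monoid_gen K)"
  unfolding add_submonoid_def
proof (intro conjI ballI)
  fix a b assume "a \<in> add_monoid_gen K" "b \<in> add_monoid_gen K"
  then show "a + b \<in> add_monoid_gen K"
    by (induction a rule: add_monoid_gen.induct)
      (auto simp: add.assoc intro: add_monoid_gen.add)
qed (rule add_monoid_gen.zero)

lemma subset_add_monoid_gen: "K \<subseteq> add_monoid_gen K"
  using add_monoid_gen.add[OF _ add_monoid_gen.zero] by fastforce

lemma add_monoid_gen_minimal:
  assumes "add_submonoid M" "K \<subseteq> M"
  shows "add_monoid_gen K \<subseteq> M"
proof
  fix m assume "m \<in> add_monoid_gen K"
  then show "m \<in> M"
    by (induction m rule: add_monoid_gen.induct)
      (use assms in \<open>auto simp: add_submonoid_def\<close>)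
qed

lemma add_monoid_gen_nonzero_cases:
  assumes "m \<in> add_monoid_gen K" "m \<noteq> 0"
  obtains \<beta> m' where "m = \<beta> + m'" "\<beta> \<in> K" "m' \<in> add_monoid_gen K"
  using assms by (cases rule: add_monoid_gen.cases) auto

definition indicator_fps :: "nat set \<Rightarrow> 'a::{zero,one} fps" where
  "indicator_fps M = Abs_fps (\<lambda>n. if n \<in> M then 1 else 0)"

lemma indicator_fps_mult_nth:
  fixes g :: "'a::comm_semiring_1 fps"
  assumes M: "add_submonoid M" "J \<subseteq> M" "\<alpha> \<in> M"
    and not_below: "\<And>\<beta>. \<beta> \<in> J \<Longrightarrow> \<not> le_S M \<beta> \<alpha>"
    and g: "fps_support g \<subseteq> add_monoid_gen J" "g $ 0 = 1"
  shows "(indicator_fps M * g) $ \<alpha> = 1"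
proof -
  let ?H = "indicator_fps M :: 'a fps"
  have vanish: "?H $ i * g $ (\<alpha> - i) = 0" if "i < \<alpha>" for i
  proof (rule ccontr)
    assume "?H $ i * g $ (\<alpha> - i) \<noteq> 0"
    then have "i \<in> M" "\<alpha> - i \<in> add_monoid_gen J"
      using g(1) by (auto simp: indicator_fps_def fps_support_def split: if_splits)
    then obtain \<beta> m where "\<alpha> - i = \<beta> + m" "\<beta> \<in> J" "m \<in> add_monoid_gen J"
      using \<open>i < \<alpha>\<close> by (auto elim: add_monoid_gen_nonzero_cases)
    moreover have "m \<in> M"
      using add_monoid_gen_minimal[OF M(1,2)] \<open>m \<in> add_monoid_gen J\<close> by blast
    then have "i + m \<in> M"
      using M(1) \<open>i \<in> M\<close> unfolding add_submonoid_def by blast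
    moreover have "\<beta> \<le> \<alpha>" "\<alpha> - \<beta> = i + m"
      using \<open>\<alpha> - i = \<beta> + m\<close> \<open>i < \<alpha>\<close> by linarith+
    ultimately have "le_S M \<beta> \<alpha>"
      by (simp add: le_S_def)
    then show False
      using not_below \<open>\<beta> \<in> J\<close> by blast
  qed
  have "(?H * g) $ \<alpha> = (\<Sum>i\<in>{0..\<alpha>}. ?H $ i * g $ (\<alpha> - i))"
    by (simp add: fps_mult_nth)
  also have "\<dots> = ?H $ \<alpha> * g $ (\<alpha> - \<alpha>) + (\<Sum>i\<in>{0..\<alpha>} - {\<alpha>}. ?H $ i * g $ (\<alpha> - i))"
    by (rule sum.remove) auto
  also have "(\<Sum>i\<in>{0..\<alpha>} - {\<alpha>}. ?H $ i * g $ (\<alpha> - i)) = 0"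
    by (rule sum.neutral) (auto intro: vanish)
  also have "?H $ \<alpha> * g $ (\<alpha> - \<alpha>) = 1"
    using M(3) g(2) by (simp add: indicator_fps_def)
  finally show ?thesis
    by simp
qed

definition factorizations :: "nat set \<Rightarrow> nat \<Rightarrow> (nat \<Rightarrow> nat) set" where
  "factorizations B s = {f. (\<forall>a. a \<notin> B \<longrightarrow> f a = 0) \<and> (\<Sum>a\<in>B. f a * a) = s}"

lemma denumerant_eq_card_factorizations:
  "denumerant S s = card (factorizations (min_gens S) s)"
  by (simp add: denumerant_def factorizations_def)

lemma finite_factorizations:
  assumes "finite B" "0 \<notin> B"
  shows "finite (factorizations B s)"
proof (rule finite_subset)
  show "factorizations B s \<subseteq> {f. \<forall>x. (x \<in> B \<longrightarrow> f x \<in> {0..s}) \<and> (x \<notin> B \<longrightarrow> f x = 0)}"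
  proof (clarsimp simp: factorizations_def)
    fix f :: "nat \<Rightarrow> nat" and x
    assume "\<forall>a. a \<notin> B \<longrightarrow> f a = 0" "x \<in> B"
    then have "f x * x \<le> (\<Sum>a\<in>B. f a * a)"
      using assms(1) by (intro member_le_sum) auto
    moreover have "f x \<le> f x * x"
      using \<open>x \<in> B\<close> assms(2) by (cases x) auto
    ultimately show "f x \<le> (\<Sum>a\<in>B. f a * a)"
      by linarith
  qed
  show "finite {f. \<forall>x. (x \<in> B \<longrightarrow> f x \<in> {0..s}) \<and> (x \<notin> B \<longrightarrow> f x = (0::nat))}"
    by (rule finite_set_of_finite_funs) (use assms in auto)
qed

lemma factorizations_add:
  "f \<in> factorizations B s \<Longrightarrow> g \<in> factorizations B t \<Longrightarrow> (\<lambda>a. f a + g a) \<in> factorizations B (s + t)"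
  by (auto simp: factorizations_def sum.distrib add_mult_distrib)

lemma factorizations_zero:
  assumes "finite B" "0 \<notin> B"
  shows "factorizations B 0 = {\<lambda>_. 0}"
proof (intro equalityI subsetI)
  fix f assume "f \<in> factorizations B 0"
  then have "f a = 0" for a
    using assms by (cases "a \<in> B") (auto simp: factorizations_def)
  then show "f \<in> {\<lambda>_. 0}"
    by auto
qed (auto simp: factorizations_def)

(* Stated in the simp normal form of (f(b := k)) a * a. *)
lemma sum_mult_if_notin:
  "b \<notin> B \<Longrightarrow> (\<Sum>a\<in>B. (if a = b then k else f a) * a) = (\<Sum>a\<in>B. f a * a)"
  by (intro sum.cong) auto

lemma factorizations_remove_one:
  assumes "f \<in> factorizations B s" "finite B" "b \<in> B" "0 < f b"
  shows "b \<le> s" "f(b := f b - 1) \<in> factorizations B (s - b)"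
proof -
  let ?r = "\<Sum>a\<in>B - {b}. f a * a"
  have "s = f b * b + ?r"
    using assms(1-3) by (simp add: factorizations_def sum.remove)
  moreover have "(\<Sum>a\<in>B. (f(b := f b - 1)) a * a) = (f b - 1) * b + ?r"
    using assms(2,3) by (simp add: sum.remove sum_mult_if_notin)
  moreover have "f b * b = (f b - 1) * b + b"
    using assms(4) by (cases "f b") auto
  ultimately show "b \<le> s" "f(b := f b - 1) \<in> factorizations B (s - b)"
    using assms(1) by (auto simp: factorizations_def)
qed

lemma card_factorizations_insert:
  assumes "finite B" "0 \<notin> B" "b \<notin> B" "0 < b"
  shows "card (factorizations (insert b B) s)
       = (\<Sum>i\<in>{i\<in>{0..s}. b dvd i}. card (factorizations B (s - i)))"
proof -
  let ?T = "SIGMA i:{i\<in>{0..s}. b dvd i}. factorizations B (s - i)"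
  have sum_insert: "(\<Sum>a\<in>insert b B. f a * a) = f b * b + (\<Sum>a\<in>B. f a * a)" for f
    using assms(1,3) by simp
  have "bij_betw (\<lambda>f. (f b * b, f(b := 0))) (factorizations (insert b B) s) ?T"
  proof (rule bij_betw_byWitness[where f' = "\<lambda>(i, g). g(b := i div b)"])
    show "\<forall>f\<in>factorizations (insert b B) s. (\<lambda>(i, g). g(b := i div b)) (f b * b, f(b := 0)) = f"
      using assms(4) by auto
    show "\<forall>p\<in>?T. (\<lambda>f. (f b * b, f(b := 0))) ((\<lambda>(i, g). g(b := i div b)) p) = p"
      using assms(3) by (auto simp: factorizations_def)
    show "(\<lambda>f. (f b * b, f(b := 0))) ` factorizations (insert b B) s \<subseteq> ?T"
    proof clarsimp
      fix f assume f: "f \<in> factorizations (insert b B) s"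
      then have s: "f b * b + (\<Sum>a\<in>B. f a * a) = s"
        by (simp add: factorizations_def sum_insert)
      then show "f b * b \<le> s \<and> f(b := 0) \<in> factorizations B (s - f b * b)"
        using f assms(3) by (auto simp: factorizations_def sum_mult_if_notin)
    qed
    show "(\<lambda>(i, g). g(b := i div b)) ` ?T \<subseteq> factorizations (insert b B) s"
    proof clarsimp
      fix i g assume "i \<le> s" "b dvd i" "g \<in> factorizations B (s - i)"
      then show "g(b := i div b) \<in> factorizations (insert b B) s"
        using assms(3) by (auto simp: factorizations_def sum_insert sum_mult_if_notin)
    qed
  qed
  then have "card (factorizations (insert b B) s) = card ?T"
    by (rule bij_betw_same_card)
  also have "\<dots> = (\<Sum>i\<in>{i\<in>{0..s}. b dvd i}. card (factorizations B (s - i)))"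
    by (rule card_SigmaI) (auto intro: finite_factorizations[OF assms(1,2)])
  finally show ?thesis .
qed

lemma prod_fps_geometric:
  assumes "finite B" "0 \<notin> B"
  shows "(\<Prod>a\<in>B. fps_geometric a)
       = (Abs_fps (\<lambda>s. of_nat (card (factorizations B s))) :: 'a::comm_semiring_1 fps)"
  using assms
proof (induction B rule: finite_induct)
  case empty
  have "factorizations {} s = (if s = 0 then {\<lambda>_. 0} else {})" for s
    by (auto simp: factorizations_def)
  then show ?case
    by (intro fps_ext) auto
next
  case (insert b B)
  then have b: "0 < b" "0 \<notin> B"
    by auto
  show ?case
  proof (rule fps_ext)
    fix s
    have geom: "fps_geometric b $ i * (of_nat n :: 'a) = (if b dvd i then of_nat n else 0)" for i n
      by (simp add: fps_geometric_def)
    have "(\<Prod>a\<in>insert b B. fps_geometric a) $ s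
        = (fps_geometric b * Abs_fps (\<lambda>s. of_nat (card (factorizations B s))) :: 'a fps) $ s"
      using insert by simp
    also have "\<dots> = (\<Sum>i=0..s. if b dvd i then of_nat (card (factorizations B (s - i))) else 0)"
      by (simp add: fps_mult_nth geom)
    also have "\<dots> = of_nat (\<Sum>i\<in>{i\<in>{0..s}. b dvd i}. card (factorizations B (s - i)))"
      by (simp only: sum.inter_filter[OF finite_atLeastAtMost] of_nat_sum if_distrib[of of_nat] of_nat_0)
    also have "\<dots> = of_nat (card (factorizations (insert b B) s))"
      using insert.hyps b by (simp add: card_factorizations_insert)
    finally show "(\<Prod>a\<in>insert b B. fps_geometric a) $ s
        = (Abs_fps (\<lambda>s. of_nat (card (factorizations (insert b B) s))) :: 'a fps) $ s"
      by simp
  qed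
qed

lemma card_factorizations_mono:
  assumes "finite B" "0 \<notin> B" "g \<in> factorizations B t"
  shows "card (factorizations B s) \<le> card (factorizations B (s + t))"
proof (rule card_inj_on_le)
  show "inj_on (\<lambda>f x. f x + g x) (factorizations B s)"
    by (rule inj_onI) (simp add: fun_eq_iff)
  show "(\<lambda>f x. f x + g x) ` factorizations B s \<subseteq> factorizations B (s + t)"
    using assms(3) by (auto intro: factorizations_add)
  show "finite (factorizations B (s + t))"
    by (rule finite_factorizations[OF assms(1,2)])
qed

locale proper_numerical_semigroup =
  fixes S :: "nat set"
  assumes numerical_semigroup: "numerical_semigroup S"
    and proper: "S \<noteq> UNIV"
begin

lemma add_submonoid: "add_submonoid S"
  using numerical_semigroup by (simp add: numerical_semigroup_def add_submonoid_def)

lemma zero_mem: "0 \<in> S"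
  and add_mem: "a \<in> S \<Longrightarrow> b \<in> S \<Longrightarrow> a + b \<in> S"
  using add_submonoid by (auto simp: add_submonoid_def)

lemma one_not_mem: "1 \<notin> S"
proof
  assume "1 \<in> S"
  then have "{i. 1 dvd i} \<subseteq> S"
    by (rule add_submonoid_multiples_subset[OF add_submonoid])
  then show False
    using proper by auto
qed

lemma min_gens_subset: "min_gens S \<subseteq> S"
  by (auto simp: min_gens_def)

lemma zero_not_mem_min_gens: "0 \<notin> min_gens S"
  by (simp add: min_gens_def)

lemma min_gens_not_sum:
  "a \<in> min_gens S \<Longrightarrow> b \<in> S \<Longrightarrow> c \<in> S \<Longrightarrow> b \<noteq> 0 \<Longrightarrow> c \<noteq> 0 \<Longrightarrow> a \<noteq> b + c"
  by (auto simp: min_gens_def)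

lemma min_gens_ge_2: "a \<in> min_gens S \<Longrightarrow> 2 \<le> a"
  using min_gens_subset zero_not_mem_min_gens one_not_mem
  by (metis One_nat_def Suc_1 in_mono less_2_cases not_less)

lemma finite_min_gens: "finite (min_gens S)"
proof -
  obtain m where m: "\<And>n. n \<notin> S \<Longrightarrow> n \<le> m"
    using numerical_semigroup
    unfolding numerical_semigroup_def finite_nat_set_iff_bounded_le by blast
  have "min_gens S \<subseteq> {..2 * m + 2}"
  proof
    fix a assume a: "a \<in> min_gens S"
    show "a \<in> {..2 * m + 2}"
    proof (rule ccontr)
      assume "a \<notin> {..2 * m + 2}"
      then have gt: "2 * m + 2 < a"
        by simp
      have big: "n \<in> S" if "m < n" for n
        using m that not_le by blast
      have "m + 1 \<in> S" "a - (m + 1) \<in> S"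
        using gt by (simp_all add: big)
      then show False
        using min_gens_not_sum[OF a] gt by force
    qed
  qed
  then show ?thesis
    by (rule finite_subset) simp
qed

lemma factorizations_nonempty: "s \<in> S \<Longrightarrow> factorizations (min_gens S) s \<noteq> {}"
proof (induction s rule: less_induct)
  case (less s)
  let ?A = "min_gens S"
  consider "s = 0" | "s \<in> ?A" | "s \<noteq> 0" "s \<notin> ?A"
    by blast
  then show ?case
  proof cases
    case 1
    then have "(\<lambda>_. 0) \<in> factorizations ?A s"
      by (simp add: factorizations_def)
    then show ?thesis
      by blast
  next
    case 2
    have "(\<Sum>a\<in>?A. (if a = s then 1 else 0) * a) = (\<Sum>a\<in>?A. if a = s then a else 0)"
      by (rule sum.cong) auto
    also have "\<dots> = s"
      using 2 finite_min_gens by simp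
    finally have "(\<lambda>a. if a = s then 1 else 0) \<in> factorizations ?A s"
      using 2 by (simp add: factorizations_def)
    then show ?thesis
      by blast
  next
    case 3
    then obtain b c where "b \<in> S" "c \<in> S" "b \<noteq> 0" "c \<noteq> 0" "s = b + c"
      using less.prems by (auto simp: min_gens_def)
    then obtain f g where "f \<in> factorizations ?A b" "g \<in> factorizations ?A c"
      using less.IH[of b] less.IH[of c] by fastforce
    then have "(\<lambda>a. f a + g a) \<in> factorizations ?A s"
      using \<open>s = b + c\<close> by (simp add: factorizations_add)
    then show ?thesis
      by blast
  qed
qed

lemma denumerant_pos: "s \<in> S \<Longrightarrow> 0 < denumerant S s"
  using factorizations_nonempty finite_factorizations[OF finite_min_gens zero_not_mem_min_gens]
  by (simp add: denumerant_eq_card_factorizations card_gt_0_iff)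

lemma denumerant_mono:
  assumes "le_S S a b"
  shows "denumerant S a \<le> denumerant S b"
proof -
  obtain g where "g \<in> factorizations (min_gens S) (b - a)"
    using assms factorizations_nonempty by (auto simp: le_S_def)
  then show ?thesis
    using card_factorizations_mono[OF finite_min_gens zero_not_mem_min_gens, of g "b - a" a] assms
    by (simp add: denumerant_eq_card_factorizations le_S_def)
qed

lemma denumerant_min_gen:
  assumes a: "a \<in> min_gens S"
  shows "denumerant S a = 1"
proof -
  let ?A = "min_gens S"
  have "factorizations ?A a = {(\<lambda>_. 0)(a := 1)}"
  proof (intro equalityI subsetI)
    fix f assume f: "f \<in> factorizations ?A a"
    have "\<exists>b\<in>?A. f b \<noteq> 0"
    proof (rule ccontr)
      assume "\<not> (\<exists>b\<in>?A. f b \<noteq> 0)"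
      then have "(\<Sum>b\<in>?A. f b * b) = 0"
        by simp
      then show False
        using f a zero_not_mem_min_gens by (auto simp: factorizations_def)
    qed
    then obtain b where b: "b \<in> ?A" "0 < f b"
      by blast
    note rest = factorizations_remove_one[OF f finite_min_gens b]
    have "a - b = (\<Sum>x\<in>?A. (f(b := f b - 1)) x * x)"
      using rest(2) by (simp add: factorizations_def)
    then have "a - b \<in> S"
      using sum_mult_mem_add_submonoid[OF add_submonoid min_gens_subset] by simp
    moreover have "b \<in> S" "b \<noteq> 0"
      using b(1) min_gens_subset zero_not_mem_min_gens by (blast, metis)
    ultimately have "a - b = 0"
      using min_gens_not_sum[OF a, of b "a - b"] rest(1) by force
    then have "b = a"
      using rest(1) by simp
    then have "f(a := f a - 1) = (\<lambda>_. 0)"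
      using rest(2) \<open>a - b = 0\<close> factorizations_zero[OF finite_min_gens zero_not_mem_min_gens]
      by auto
    then show "f \<in> {(\<lambda>_. 0)(a := 1)}"
      using b \<open>b = a\<close> by (auto simp: fun_eq_iff split: if_splits)
  next
    fix f :: "nat \<Rightarrow> nat"
    assume "f \<in> {(\<lambda>_. 0)(a := 1)}"
    moreover have "(\<Sum>x\<in>?A. ((\<lambda>_. 0)(a := 1)) x * x) = a"
      using a finite_min_gens by (simp add: if_distrib[of "\<lambda>k. k * _"] sum.delta cong: if_cong)
    ultimately show "f \<in> factorizations ?A a"
      using a by (auto simp: factorizations_def)
  qed
  then show ?thesis
    by (simp add: denumerant_eq_card_factorizations)
qed

lemma le_S_trans: "le_S S a b \<Longrightarrow> le_S S b c \<Longrightarrow> le_S S a c"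
  using add_mem[of "c - b" "b - a"] by (auto simp: le_S_def)

end

locale cyclotomic_semigroup = proper_numerical_semigroup +
  fixes e :: "nat \<Rightarrow> int"
  assumes cyclotomic: "cyclotomic_exponent_seq S e"
begin

lemma cutoff_semigroup_poly_fps:
  "fps_cutoff (Suc N) (semigroup_poly_fps S) = fps_cutoff (Suc N) (\<Prod>j\<in>{1..N}. cyc_factor j (e j))"
proof (rule fps_ext)
  fix n
  have "(\<Prod>j\<in>{1..N}. cyc_factor j (e j)) $ n = (\<Prod>j\<in>{1..n}. cyc_factor j (e j)) $ n" if "n \<le> N"
  proof -
    have "{1..N} = {1..n} \<union> {Suc n..N}"
      using that by auto
    then have split: "(\<Prod>j\<in>{1..N}. cyc_factor j (e j))
        = (\<Prod>j\<in>{1..n}. cyc_factor j (e j)) * (\<Prod>j\<in>{Suc n..N}. cyc_factor j (e j))"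
      by (simp add: prod.union_disjoint)
    have "fps_cutoff (Suc n) (\<Prod>j\<in>{Suc n..N}. cyc_factor j (e j)) = fps_cutoff (Suc n) (\<Prod>j\<in>{Suc n..N}. 1)"
      by (rule fps_cutoff_prod_cong) (simp add: fps_cutoff_cyc_factor)
    then have "fps_cutoff (Suc n) (\<Prod>j\<in>{1..N}. cyc_factor j (e j))
        = fps_cutoff (Suc n) ((\<Prod>j\<in>{1..n}. cyc_factor j (e j)) * 1)"
      unfolding split by (intro fps_cutoff_mult_cong) simp_all
    then show ?thesis
      by (simp add: fps_cutoff_eq_nthD)
  qed
  then show "fps_cutoff (Suc N) (semigroup_poly_fps S) $ n
      = fps_cutoff (Suc N) (\<Prod>j\<in>{1..N}. cyc_factor j (e j)) $ n"
    using cyclotomic by (simp add: cyclotomic_exponent_seq_def)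
qed

lemma semigroup_poly_fps_eq: "semigroup_poly_fps S = (1 - fps_X) * indicator_fps S"
  by (simp add: semigroup_poly_fps_def indicator_fps_def)

lemma exp_one: "e 1 = 1"
proof -
  have "semigroup_poly_fps S $ 1 = - 1"
    using zero_mem one_not_mem
    by (simp add: semigroup_poly_fps_eq indicator_fps_def algebra_simps fps_X_mult_nth)
  moreover have "semigroup_poly_fps S $ 1 = - of_int (e 1)"
    using cyclotomic cyc_factor_nth_self[of 1 "e 1"] by (simp add: cyclotomic_exponent_seq_def)
  ultimately show ?thesis
    by simp
qed

lemma cutoff_indicator_fps:
  assumes "0 < N"
  shows "fps_cutoff (Suc N) (indicator_fps S) = fps_cutoff (Suc N) (\<Prod>j\<in>{2..N}. cyc_factor j (e j))"
proof -
  have "{1..N} = insert 1 {2..N}"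
    using assms by auto
  then have "(\<Prod>j\<in>{1..N}. cyc_factor j (e j)) = (1 - fps_X) * (\<Prod>j\<in>{2..N}. cyc_factor j (e j))"
    using exp_one by (simp add: cyc_factor_def)
  then have "fps_cutoff (Suc N) ((1 - fps_X) * indicator_fps S)
      = fps_cutoff (Suc N) ((1 - fps_X) * (\<Prod>j\<in>{2..N}. cyc_factor j (e j)))"
    using cutoff_semigroup_poly_fps[of N] by (simp add: semigroup_poly_fps_eq)
  then have "fps_cutoff (Suc N) (fps_geometric 1 * ((1 - fps_X) * indicator_fps S))
      = fps_cutoff (Suc N) (fps_geometric 1 * ((1 - fps_X) * (\<Prod>j\<in>{2..N}. cyc_factor j (e j))))"
    by (rule fps_cutoff_mult_cong[OF refl])
  moreover have "fps_geometric 1 * (1 - fps_X) = (1 :: rat fps)"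
    using one_minus_fps_X_power_mult_geometric[of 1] by (simp add: mult.commute)
  ultimately show ?thesis
    by (simp add: mult.assoc[symmetric])
qed

lemma exp_nonzero_mem: "2 \<le> d \<Longrightarrow> e d \<noteq> 0 \<Longrightarrow> d \<in> S"
proof (induction d rule: less_induct)
  case (less d)
  show ?case
  proof (rule ccontr)
    assume "d \<notin> S"
    let ?Q = "\<Prod>j\<in>{2..<d}. cyc_factor j (e j)"
    have "fps_support ?Q \<subseteq> S"
      by (rule fps_support_prod_cyc_factor[OF add_submonoid]) (auto intro: less.IH)
    then have "?Q $ d = 0"
      using \<open>d \<notin> S\<close> unfolding fps_support_def by blast
    have "{2..d} = insert d {2..<d}"
      using less.prems(1) by auto
    then have "(\<Prod>j\<in>{2..d}. cyc_factor j (e j)) $ d = (cyc_factor d (e d) * ?Q) $ d"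
      by simp
    also have "\<dots> = - of_int (e d)"
      using less.prems(1) \<open>?Q $ d = 0\<close> by (simp add: cyc_factor_mult_nth_self prod_cyc_factor_nth_0)
    finally have "(\<Prod>j\<in>{2..d}. cyc_factor j (e j)) $ d = - of_int (e d)" .
    moreover have "indicator_fps S $ d = (\<Prod>j\<in>{2..d}. cyc_factor j (e j)) $ d"
      using less.prems(1) by (intro fps_cutoff_eq_nthD[OF cutoff_indicator_fps]) auto
    ultimately show False
      using \<open>d \<notin> S\<close> less.prems(2) by (simp add: indicator_fps_def)
  qed
qed

(* (1 - x^j)^(quotient_exp j) is the j-th factor of (prod_{a in A} (1 - x^a)^(-1)) / H(x). *)
definition quotient_exp :: "nat \<Rightarrow> int" where
  "quotient_exp j = - e j - (if j \<in> min_gens S then 1 else 0)"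

lemma cutoff_denumerant_fps:
  assumes "0 < N"
  shows "fps_cutoff (Suc N) (Abs_fps (\<lambda>s. of_nat (denumerant S s)))
       = fps_cutoff (Suc N) (indicator_fps S * (\<Prod>j\<in>{2..N}. cyc_factor j (quotient_exp j)))"
proof -
  let ?A = "min_gens S"
  let ?G = "\<lambda>j. if j \<in> ?A then fps_geometric j else 1 :: rat fps"
  have "Abs_fps (\<lambda>s. of_nat (denumerant S s)) = (\<Prod>a\<in>?A. fps_geometric a :: rat fps)"
    by (simp add: prod_fps_geometric finite_min_gens zero_not_mem_min_gens
        denumerant_eq_card_factorizations)
  also have "fps_cutoff (Suc N) \<dots> = fps_cutoff (Suc N) (\<Prod>a\<in>?A. if a \<le> N then fps_geometric a else 1)"
  proof (rule fps_cutoff_prod_cong)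
    fix a assume "a \<in> ?A"
    then show "fps_cutoff (Suc N) (fps_geometric a :: rat fps)
        = fps_cutoff (Suc N) (if a \<le> N then fps_geometric a else 1)"
      using fps_cutoff_cyc_factor[of a "Suc N" "- 1"] cyc_factor_minus_one[of a] min_gens_ge_2
      by auto
  qed
  also have "(\<Prod>a\<in>?A. if a \<le> N then fps_geometric a else 1) = (\<Prod>a\<in>{a\<in>?A. a \<le> N}. fps_geometric a)"
    by (rule prod.inter_filter[symmetric]) (rule finite_min_gens)
  also have "{a\<in>?A. a \<le> N} = {j\<in>{2..N}. j \<in> ?A}"
    using min_gens_ge_2 by auto
  also have "(\<Prod>j\<in>{j\<in>{2..N}. j \<in> ?A}. fps_geometric j) = (\<Prod>j\<in>{2..N}. ?G j)"
    by (rule prod.inter_filter) simp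
  also have "\<dots> = (\<Prod>j\<in>{2..N}. cyc_factor j (e j)) * (\<Prod>j\<in>{2..N}. cyc_factor j (quotient_exp j))"
    unfolding prod.distrib[symmetric]
    by (rule prod.cong) (simp_all add: cyc_factor_add quotient_exp_def cyc_factor_minus_one)
  also have "fps_cutoff (Suc N) \<dots>
      = fps_cutoff (Suc N) (indicator_fps S * (\<Prod>j\<in>{2..N}. cyc_factor j (quotient_exp j)))"
    by (rule fps_cutoff_mult_cong[OF cutoff_indicator_fps[OF assms, symmetric] refl])
  finally show ?thesis .
qed

lemma denumerant_eq_one_minus_quotient_exp:
  assumes "2 \<le> \<alpha>" "\<alpha> \<in> S"
    and below: "\<And>j. j \<in> {2..<\<alpha>} \<Longrightarrow> quotient_exp j \<noteq> 0 \<Longrightarrow> j \<in> S \<and> \<not> le_S S j \<alpha>"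
  shows "int (denumerant S \<alpha>) = 1 - quotient_exp \<alpha>"
proof -
  define J where "J = {j\<in>{2..<\<alpha>}. quotient_exp j \<noteq> 0}"
  let ?H = "indicator_fps S :: rat fps"
  let ?W = "\<Prod>j\<in>{2..<\<alpha>}. cyc_factor j (quotient_exp j)"
  have "fps_support ?W \<subseteq> add_monoid_gen J"
    by (rule fps_support_prod_cyc_factor[OF add_submonoid_add_monoid_gen])
      (auto simp: J_def intro: subset_add_monoid_gen[THEN subsetD])
  moreover have "?W $ 0 = 1"
    by (rule prod_cyc_factor_nth_0) simp
  moreover have "J \<subseteq> S" "\<And>\<beta>. \<beta> \<in> J \<Longrightarrow> \<not> le_S S \<beta> \<alpha>"
    using below by (auto simp: J_def)
  ultimately have HW: "(?H * ?W) $ \<alpha> = 1"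
    using indicator_fps_mult_nth[OF add_submonoid _ \<open>\<alpha> \<in> S\<close>] by blast
  have "{2..\<alpha>} = insert \<alpha> {2..<\<alpha>}"
    using assms(1) by auto
  then have factor: "?H * (\<Prod>j\<in>{2..\<alpha>}. cyc_factor j (quotient_exp j))
      = cyc_factor \<alpha> (quotient_exp \<alpha>) * (?H * ?W)"
    by (simp add: mult_ac)
  have "(?H * ?W) $ 0 = 1"
    using zero_mem \<open>?W $ 0 = 1\<close> by (simp add: indicator_fps_def)
  then have "(?H * (\<Prod>j\<in>{2..\<alpha>}. cyc_factor j (quotient_exp j))) $ \<alpha> = 1 - of_int (quotient_exp \<alpha>)"
    unfolding factor using HW assms(1) by (simp add: cyc_factor_mult_nth_self)
  moreover have "of_nat (denumerant S \<alpha>) = (?H * (\<Prod>j\<in>{2..\<alpha>}. cyc_factor j (quotient_exp j))) $ \<alpha>"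
    using fps_cutoff_eq_nthD[OF cutoff_denumerant_fps, of \<alpha> \<alpha>] assms(1) by simp
  ultimately have "(of_int (int (denumerant S \<alpha>)) :: rat) = of_int (1 - quotient_exp \<alpha>)"
    by simp
  then show ?thesis
    by (simp only: of_int_eq_iff)
qed

lemma exp_min_gen:
  assumes a: "a \<in> min_gens S"
  shows "e a = - 1"
proof -
  have "int (denumerant S a) = 1 - quotient_exp a"
  proof (rule denumerant_eq_one_minus_quotient_exp)
    show "2 \<le> a" "a \<in> S"
      using a min_gens_ge_2 min_gens_subset by auto
    fix j assume j: "j \<in> {2..<a}" "quotient_exp j \<noteq> 0"
    have "j \<in> S"
    proof (cases "j \<in> min_gens S")
      case True
      then show ?thesis using min_gens_subset by blast
    next
      case False
      then have "e j \<noteq> 0"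
        using j(2) by (simp add: quotient_exp_def)
      then show ?thesis
        using exp_nonzero_mem j(1) by simp
    qed
    moreover have "\<not> le_S S j a"
      using min_gens_not_sum[OF a \<open>j \<in> S\<close>, of "a - j"] j(1) by (auto simp: le_S_def)
    ultimately show "j \<in> S \<and> \<not> le_S S j a"
      by blast
  qed
  then show ?thesis
    using denumerant_min_gen[OF a] a by (simp add: quotient_exp_def)
qed

lemma quotient_exp_nonzero_mem_cyc_E: "2 \<le> j \<Longrightarrow> quotient_exp j \<noteq> 0 \<Longrightarrow> j \<in> cyc_E S e"
  using exp_min_gen[of j] by (auto simp: quotient_exp_def cyc_E_def split: if_splits)

lemma cyc_E_subset: "cyc_E S e \<subseteq> S"
  using exp_nonzero_mem by (auto simp: cyc_E_def)

lemma exp_minimal_cyc_E: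
  assumes "\<alpha> \<in> cyc_E S e" and minimal: "\<forall>\<beta>\<in>cyc_E S e. le_S S \<beta> \<alpha> \<longrightarrow> \<beta> = \<alpha>"
  shows "e \<alpha> = int (denumerant S \<alpha>) - 1"
proof -
  have "int (denumerant S \<alpha>) = 1 - quotient_exp \<alpha>"
  proof (rule denumerant_eq_one_minus_quotient_exp)
    show "2 \<le> \<alpha>" "\<alpha> \<in> S"
      using assms(1) cyc_E_subset by (auto simp: cyc_E_def)
    fix j assume "j \<in> {2..<\<alpha>}" "quotient_exp j \<noteq> 0"
    moreover from this have "j \<in> cyc_E S e"
      by (simp add: quotient_exp_nonzero_mem_cyc_E)
    ultimately show "j \<in> S \<and> \<not> le_S S j \<alpha>"
      using minimal cyc_E_subset by auto
  qed
  then show ?thesis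
    using assms(1) by (simp add: quotient_exp_def cyc_E_def)
qed

lemma exists_minimal_cyc_E_below:
  assumes "d \<in> cyc_E S e"
  obtains \<alpha> where "\<alpha> \<in> cyc_E S e" "le_S S \<alpha> d" "\<forall>\<beta>\<in>cyc_E S e. le_S S \<beta> \<alpha> \<longrightarrow> \<beta> = \<alpha>"
proof -
  let ?P = "\<lambda>\<beta>. \<beta> \<in> cyc_E S e \<and> le_S S \<beta> d"
  define \<alpha> where "\<alpha> = (LEAST \<beta>. ?P \<beta>)"
  have "?P d"
    using assms zero_mem by (simp add: le_S_def)
  then have \<alpha>: "?P \<alpha>"
    unfolding \<alpha>_def by (rule LeastI)
  have "\<beta> = \<alpha>" if "\<beta> \<in> cyc_E S e" "le_S S \<beta> \<alpha>" for \<beta>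
  proof -
    have "?P \<beta>"
      using that \<alpha> le_S_trans by blast
    then have "\<alpha> \<le> \<beta>"
      unfolding \<alpha>_def by (rule Least_le)
    then show ?thesis
      using that(2) by (simp add: le_S_def)
  qed
  then show ?thesis
    using \<alpha> that by blast
qed

lemma denumerant_cyc_E_ge_2:
  assumes "d \<in> cyc_E S e"
  shows "2 \<le> denumerant S d"
proof -
  obtain \<alpha> where \<alpha>: "\<alpha> \<in> cyc_E S e" "le_S S \<alpha> d" "\<forall>\<beta>\<in>cyc_E S e. le_S S \<beta> \<alpha> \<longrightarrow> \<beta> = \<alpha>"
    using exists_minimal_cyc_E_below[OF assms] .
  have "e \<alpha> \<noteq> 0"
    using \<alpha>(1) by (simp add: cyc_E_def)
  moreover have "0 < denumerant S \<alpha>"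
    using denumerant_pos \<alpha>(1) cyc_E_subset by blast
  ultimately have "2 \<le> denumerant S \<alpha>"
    using exp_minimal_cyc_E[OF \<alpha>(1,3)] by linarith
  also have "\<dots> \<le> denumerant S d"
    using denumerant_mono[OF \<alpha>(2)] .
  finally show ?thesis .
qed

end

theorem lemma4p5:
  fixes S :: "nat set" and e :: "nat \<Rightarrow> int"
  assumes "numerical_semigroup S"
    and "S \<noteq> UNIV"
    and "cyclotomic_exponent_seq S e"
  shows "(\<forall>d\<in>cyc_E S e. denumerant S d \<ge> 2)
       \<and> (\<forall>\<alpha>\<in>cyc_E S e. (\<forall>\<beta>\<in>cyc_E S e. le_S S \<beta> \<alpha> \<longrightarrow> \<beta> = \<alpha>)
              \<longrightarrow> e \<alpha> = int (denumerant S \<alpha>) - 1)"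
proof -
  interpret cyclotomic_semigroup S e
    by unfold_locales (fact assms)+
  show ?thesis
    using denumerant_cyc_E_ge_2 exp_minimal_cyc_E by blast
qed

end
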